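(* Let $p\in\mathbb{T}^{\mathcal{P}([n])}$ be a tropical Wick vector. Then $\mathcal{Q}(p^* )\subseteq\mathbb{T}^{\mathcal{J}}$ is the set of admissible vectors in $\mathcal{Q}(p)^\top$.
   Context: $\mathbb{T}=\mathbb{R}\cup\{\infty\}$; $\mathcal{P}([n])$ the set of subsets of $[n]$. A tropical Wick vector is $p$ such that for all $S,T\subseteq[n]$ the minimum $\min_{i\in S\Delta T}(p_{S\Delta\{i\}}+p_{T\Delta\{i\}})$ is attained at least twice or equals $\infty$. The dual is $p^*$ with $p^*_S=p_{[n]\setminus S}$ (also a tropical Wick vector). Let $\mathcal{J}=\{1,\dots,n,1^*,\dots,n^*\}$ with involution $i\leftrightarrow i^*$; $X\subseteq\mathcal{J}$ is admissible if $X\cap X^*=\emptyset$, and a vector is admissible if its support (coordinates $\neq\infty$) is admissible. For $S\subseteq[n]$ let $\bar S=S\cup\{i^*:i\in[n]\setminus S\}$ and $\bar p_{\bar S}:=p_S$. For $T\subseteq[n]$: $(c_T)_i=\bar p_{\bar T\Delta\{i,i^*\}}$ if $i\in\bar T$, $\infty$ otherwise. Circuits of $p$: vectors $c_T+\lambda\mathbf{1}$ ($\lambda\in\mathbb{R}$) with nonempty support. $x,y$ are tropically orthogonal if $\min_k(x_k+y_k)$ is attained at least twice or equals $\infty$; for $X\subseteq\mathbb{T}^{\mathcal{J}}$, $X^\top$ is the set of vectors tropically orthogonal to all elements of $X$. The cocycle space $\mathcal{Q}(q)$ of a tropical Wick vector $q$ is the set of admissible vectors tropically orthogonal to all circuits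 of $q$. *)

theory Defs
  imports "HOL-Library.Extended_Real"
begin

text \<open>Tropical numbers T = R \<union> {\<infinity>} are modelled as extended reals that are never -\<infinity>.
  Index set J = {1..n, 1*..n*}: element Pos i is i, element Star i is i*.\<close>

datatype elt = Pos nat | Star nat

fun conj_elt :: "elt \<Rightarrow> elt" where
  "conj_elt (Pos i) = Star i"
| "conj_elt (Star i) = Pos i"

definition sdiff :: "'a set \<Rightarrow> 'a set \<Rightarrow> 'a set" where
  "sdiff A B = (A - B) \<union> (B - A)"

definition Jset :: "nat \<Rightarrow> elt set" where
  "Jset n = Pos ` {1..n} \<union> Star ` {1..n}"

definition trop_vanish :: "'a set \<Rightarrow> ('a \<Rightarrow> ereal) \<Rightarrow> bool" where
  "trop_vanish A f \<longleftrightarrow> (\<forall>k\<in>A. f k = \<infinity>) \<or>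
     (\<exists>i\<in>A. \<exists>j\<in>A. i \<noteq> j \<and> f i = f j \<and> (\<forall>k\<in>A. f i \<le> f k))"

definition is_Pvec :: "nat \<Rightarrow> (nat set \<Rightarrow> ereal) \<Rightarrow> bool" where
  "is_Pvec n p \<longleftrightarrow> (\<forall>S. S \<subseteq> {1..n} \<longrightarrow> p S \<noteq> -\<infinity>)"

definition tropical_wick :: "nat \<Rightarrow> (nat set \<Rightarrow> ereal) \<Rightarrow> bool" where
  "tropical_wick n p \<longleftrightarrow> is_Pvec n p \<and>
     (\<forall>S T. S \<subseteq> {1..n} \<longrightarrow> T \<subseteq> {1..n} \<longrightarrow>
        trop_vanish (sdiff S T) (\<lambda>i. p (sdiff S {i}) + p (sdiff T {i})))"

definition dual_vec :: "nat \<Rightarrow> (nat set \<Rightarrow> ereal) \<Rightarrow> (nat set \<Rightarrow> ereal)" where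
  "dual_vec n p = (\<lambda>S. p ({1..n} - S))"

definition tvec :: "nat \<Rightarrow> (elt \<Rightarrow> ereal) set" where
  "tvec n = {x. (\<forall>k\<in>Jset n. x k \<noteq> -\<infinity>) \<and> (\<forall>k. k \<notin> Jset n \<longrightarrow> x k = \<infinity>)}"

definition supp :: "nat \<Rightarrow> (elt \<Rightarrow> ereal) \<Rightarrow> elt set" where
  "supp n x = {k\<in>Jset n. x k \<noteq> \<infinity>}"

definition admissible_set :: "elt set \<Rightarrow> bool" where
  "admissible_set X \<longleftrightarrow> X \<inter> conj_elt ` X = {}"

definition admissible_vec :: "nat \<Rightarrow> (elt \<Rightarrow> ereal) \<Rightarrow> bool" where
  "admissible_vec n x \<longleftrightarrow> admissible_set (supp n x)"

definition bar_set :: "nat \<Rightarrow> nat set \<Rightarrow> elt set" where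
  "bar_set n S = Pos ` S \<union> Star ` ({1..n} - S)"

text \<open>bar p_{bar S} = p_S; for X = bar S we recover S as {i. Pos i \<in> X}.\<close>
definition bar_p :: "nat \<Rightarrow> (nat set \<Rightarrow> ereal) \<Rightarrow> elt set \<Rightarrow> ereal" where
  "bar_p n p X = p {i\<in>{1..n}. Pos i \<in> X}"

definition circ_vec :: "nat \<Rightarrow> (nat set \<Rightarrow> ereal) \<Rightarrow> nat set \<Rightarrow> elt \<Rightarrow> ereal" where
  "circ_vec n p T = (\<lambda>k. if k \<in> bar_set n T
      then bar_p n p (sdiff (bar_set n T) {k, conj_elt k}) else \<infinity>)"

definition circuits :: "nat \<Rightarrow> (nat set \<Rightarrow> ereal) \<Rightarrow> (elt \<Rightarrow> ereal) set" where
  "circuits n p = {x. \<exists>T lam. T \<subseteq> {1..n} \<and> x = (\<lambda>k. circ_vec n p T k + ereal lam)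
      \<and> supp n x \<noteq> {}}"

definition trop_orth :: "nat \<Rightarrow> (elt \<Rightarrow> ereal) \<Rightarrow> (elt \<Rightarrow> ereal) \<Rightarrow> bool" where
  "trop_orth n x y \<longleftrightarrow> trop_vanish (Jset n) (\<lambda>k. x k + y k)"

definition trop_perp :: "nat \<Rightarrow> (elt \<Rightarrow> ereal) set \<Rightarrow> (elt \<Rightarrow> ereal) set" where
  "trop_perp n X = {y \<in> tvec n. \<forall>x\<in>X. trop_orth n x y}"

definition cocycles :: "nat \<Rightarrow> (nat set \<Rightarrow> ereal) \<Rightarrow> (elt \<Rightarrow> ereal) set" where
  "cocycles n q = {x \<in> tvec n. admissible_vec n x \<and> (\<forall>c\<in>circuits n q. trop_orth n x c)}"

end

theory Submission
  imports Defs
begin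

text \<open>
  For \<open>\<supseteq>\<close>: the Wick relation for the pair \<open>V, W\<close> says exactly that the circuit
  \<open>c\<^sup>*_([n]-V)\<close> of \<open>p\<^sup>*\<close> is tropically orthogonal to the circuit \<open>c_W\<close> of \<open>p\<close>, so every
  circuit of \<open>p\<^sup>*\<close> lies in \<open>Q(p)\<close>.

  For \<open>\<subseteq>\<close>: if \<open>y \<in> Q(p)\<close> and \<open>x \<in> Q(p\<^sup>*)\<close> were not orthogonal, \<open>y + x\<close> would have a
  unique finite minimum at some \<open>k\<^sub>0\<close>. We show that \<open>y\<close> is dominated by a circuit \<open>d\<close> of
  \<open>p\<^sup>*\<close> with \<open>d k\<^sub>0 = y k\<^sub>0\<close>; then \<open>x + d\<close> also has its unique minimum at \<open>k\<^sub>0\<close>,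
  contradicting \<open>x \<perp> d\<close>. Let \<open>S\<close> be the positive support of \<open>y\<close>, so that \<open>y\<close> lives on
  \<open>bar S\<close>. Orthogonality of \<open>y\<close> to the circuits \<open>c_Y\<close> is an exchange property, and \<open>d\<close>
  is the dual circuit for a set \<open>V\<close> chosen extremally: \<open>|S \<triangle> V|\<close> maximal among sets
  where \<open>p\<close> is finite, then as few infinite entries of \<open>y\<close> over \<open>S \<triangle> V\<close> as possible,
  then minimal total weight. A violation of the domination would, after one exchange
  step, produce a set that is better in this order.
\<close>


lemma trop_vanishD:
  "trop_vanish A f \<Longrightarrow> a \<in> A \<Longrightarrow> f a \<noteq> \<infinity> \<Longrightarrow> \<exists>b\<in>A. b \<noteq> a \<and> f b \<le> f a"
  unfolding trop_vanish_def by (metis order_refl)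

lemma trop_vanish_iff_no_unique_min:
  assumes "finite A"
  shows "trop_vanish A f \<longleftrightarrow> \<not> (\<exists>a\<in>A. f a \<noteq> \<infinity> \<and> (\<forall>b\<in>A. b \<noteq> a \<longrightarrow> f a < f b))"
proof
  assume "trop_vanish A f"
  then show "\<not> (\<exists>a\<in>A. f a \<noteq> \<infinity> \<and> (\<forall>b\<in>A. b \<noteq> a \<longrightarrow> f a < f b))"
    using trop_vanishD by (metis not_le)
next
  assume no_min: "\<not> (\<exists>a\<in>A. f a \<noteq> \<infinity> \<and> (\<forall>b\<in>A. b \<noteq> a \<longrightarrow> f a < f b))"
  show "trop_vanish A f"
  proof (cases "\<forall>k\<in>A. f k = \<infinity>")
    case False
    then have "f ` A \<noteq> {}" by auto
    then obtain a where a: "a \<in> A" "f a = Min (f ` A)"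
      using Min_in[OF finite_imageI[OF assms]] by (metis imageE)
    then have le: "\<forall>k\<in>A. f a \<le> f k" using assms by simp
    with False have "f a \<noteq> \<infinity>" by (metis top.extremum_unique top_ereal_def)
    with no_min a obtain b where "b \<in> A" "b \<noteq> a" "\<not> f a < f b" by blast
    with le a show ?thesis unfolding trop_vanish_def by (metis antisym not_less)
  qed (simp add: trop_vanish_def)
qed

lemma trop_vanish_reindex:
  assumes "finite B" "inj_on g A" "g ` A \<subseteq> B"
    and "\<And>a. a \<in> A \<Longrightarrow> f (g a) = h a"
    and "\<And>b. b \<in> B \<Longrightarrow> b \<notin> g ` A \<Longrightarrow> f b = \<infinity>"
  shows "trop_vanish B f \<longleftrightarrow> trop_vanish A h"
proof -
  have "finite A" using assms(1-3) by (metis finite_image_iff finite_subset)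
  have "(\<exists>k\<in>B. f k \<noteq> \<infinity> \<and> (\<forall>b\<in>B. b \<noteq> k \<longrightarrow> f k < f b)) \<longleftrightarrow>
        (\<exists>a\<in>A. h a \<noteq> \<infinity> \<and> (\<forall>b\<in>A. b \<noteq> a \<longrightarrow> h a < h b))"
  proof
    assume "\<exists>k\<in>B. f k \<noteq> \<infinity> \<and> (\<forall>b\<in>B. b \<noteq> k \<longrightarrow> f k < f b)"
    then obtain k where k: "k \<in> B" "f k \<noteq> \<infinity>" "\<forall>b\<in>B. b \<noteq> k \<longrightarrow> f k < f b" by blast
    then obtain a where "a \<in> A" "k = g a" using assms(5) by blast
    then show "\<exists>a\<in>A. h a \<noteq> \<infinity> \<and> (\<forall>b\<in>A. b \<noteq> a \<longrightarrow> h a < h b)"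
      using k assms(2-4) by (metis image_subset_iff inj_on_contraD)
  next
    assume "\<exists>a\<in>A. h a \<noteq> \<infinity> \<and> (\<forall>b\<in>A. b \<noteq> a \<longrightarrow> h a < h b)"
    then obtain a where a: "a \<in> A" "h a \<noteq> \<infinity>" "\<forall>b\<in>A. b \<noteq> a \<longrightarrow> h a < h b" by blast
    have "f (g a) < f b" if "b \<in> B" "b \<noteq> g a" for b
    proof (cases "b \<in> g ` A")
      case True
      then obtain b' where "b' \<in> A" "b = g b'" by blast
      then show ?thesis using that a assms(4) by (metis image_subset_iff)
    next
      case False
      then have "f b = \<infinity>" using that assms(5) by blast
      then show ?thesis using a assms(4) by (simp add: less_top[symmetric])
    qed
    moreover have "g a \<in> B" "f (g a) \<noteq> \<infinity>" using a assms(3,4) by auto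
    ultimately show "\<exists>k\<in>B. f k \<noteq> \<infinity> \<and> (\<forall>b\<in>B. b \<noteq> k \<longrightarrow> f k < f b)"
      by blast
  qed
  then show ?thesis
    using trop_vanish_iff_no_unique_min[OF assms(1)] trop_vanish_iff_no_unique_min[OF \<open>finite A\<close>]
    by blast
qed

lemma trop_vanish_add_const: "trop_vanish A (\<lambda>a. h a + ereal c) \<longleftrightarrow> trop_vanish A h"
proof -
  have "(x + ereal c \<le> y + ereal c) = (x \<le> y)" "(x + ereal c = y + ereal c) = (x = y)"
    "(x + ereal c = \<infinity>) = (x = \<infinity>)" for x y :: ereal
    by (cases x; cases y; simp)+
  then show ?thesis unfolding trop_vanish_def by simp
qed

lemma ereal_infty_add: "b \<noteq> -\<infinity> \<Longrightarrow> \<infinity> + b = (\<infinity>::ereal)"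
  by (cases b) auto

lemma ereal_add_infty: "b \<noteq> -\<infinity> \<Longrightarrow> b + \<infinity> = (\<infinity>::ereal)"
  by (cases b) auto

lemma sdiff_commute: "sdiff A B = sdiff B A"
  by (auto simp: sdiff_def)

lemma sdiff_singleton_cancel [simp]: "sdiff (sdiff Y {a}) {a} = Y"
  by (auto simp: sdiff_def)

lemma sdiff_singleton_commute: "sdiff (sdiff Y {a}) {b} = sdiff (sdiff Y {b}) {a}"
  by (auto simp: sdiff_def)

lemma sdiff_sdiff_singleton_in: "b \<in> sdiff S Y \<Longrightarrow> sdiff S (sdiff Y {b}) = sdiff S Y - {b}"
  by (auto simp: sdiff_def)

lemma sdiff_sdiff_singleton_notin: "b \<notin> sdiff S Y \<Longrightarrow> sdiff S (sdiff Y {b}) = insert b (sdiff S Y)"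
  by (auto simp: sdiff_def)

lemma sdiff_subset: "A \<subseteq> N \<Longrightarrow> B \<subseteq> N \<Longrightarrow> sdiff A B \<subseteq> N"
  by (auto simp: sdiff_def)

lemma sdiff_singleton_subset: "Y \<subseteq> N \<Longrightarrow> b \<in> N \<Longrightarrow> sdiff Y {b} \<subseteq> N"
  by (auto simp: sdiff_def)

lemma card_insert_Diff_singleton:
  assumes "finite A" "a \<in> A" "b \<notin> A - {a}"
  shows "card (insert b (A - {a})) = card A"
proof -
  have "card (insert b (A - {a})) = Suc (card (A - {a}))"
    using assms(1,3) by simp
  also have "\<dots> = card A"
    using card_Suc_Diff1[OF assms(1,2)] .
  finally show ?thesis .
qed

lemma finite_lex_min:
  fixes f :: "'a \<Rightarrow> 'b::linorder" and g :: "'a \<Rightarrow> 'c::linorder"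
  assumes "finite A" "A \<noteq> {}"
  obtains x where "x \<in> A" "\<And>y. y \<in> A \<Longrightarrow> f x < f y \<or> (f x = f y \<and> g x \<le> g y)"
proof -
  define B where "B = {x \<in> A. f x = Min (f ` A)}"
  have "Min (f ` A) \<in> f ` A" using assms by simp
  then have "finite B" "B \<noteq> {}" using assms(1) by (auto simp: B_def)
  then have "Min (g ` B) \<in> g ` B" by simp
  then obtain x where x: "x \<in> B" "g x = Min (g ` B)" by auto
  have "f x < f y \<or> (f x = f y \<and> g x \<le> g y)" if "y \<in> A" for y
  proof (cases "y \<in> B")
    case True
    with x \<open>finite B\<close> show ?thesis by (simp add: B_def)
  next
    case False
    with x that assms(1) show ?thesis by (auto simp: B_def order.not_eq_order_implies_strict)
  qed
  with x that show thesis by (auto simp: B_def)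
qed

section \<open>The index set \<open>J\<close> and circuits\<close>

lemma finite_Jset: "finite (Jset n)"
  by (simp add: Jset_def)

lemma conj_elt_conj_elt [simp]: "conj_elt (conj_elt k) = k"
  by (cases k) auto

definition bar_elt :: "nat set \<Rightarrow> nat \<Rightarrow> elt" where
  "bar_elt S j = (if j \<in> S then Pos j else Star j)"

lemma bar_elt_eq_iff: "bar_elt S i = bar_elt S j \<longleftrightarrow> i = j"
  by (auto simp: bar_elt_def)

lemma bar_elt_sdiff:
  "bar_elt W j = (if j \<in> sdiff V W then conj_elt (bar_elt V j) else bar_elt V j)"
  by (auto simp: bar_elt_def sdiff_def)

lemma bar_elt_in_Jset: "j \<in> {1..n} \<Longrightarrow> bar_elt S j \<in> Jset n"
  by (auto simp: bar_elt_def Jset_def)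

lemma Jset_cases:
  assumes "k \<in> Jset n"
  obtains j where "j \<in> {1..n}" "k = bar_elt S j"
    | j where "j \<in> {1..n}" "k = conj_elt (bar_elt S j)"
proof -
  obtain i where i: "i \<in> {1..n}" "k = Pos i \<or> k = Star i"
    using assms by (auto simp: Jset_def)
  then have "k = bar_elt S i \<or> k = conj_elt (bar_elt S i)"
    by (auto simp: bar_elt_def)
  with i that show thesis by blast
qed

lemma circ_vec_bar_elt:
  assumes "W \<subseteq> {1..n}" "j \<in> {1..n}"
  shows "circ_vec n p W (bar_elt W j) = p (sdiff W {j})"
    and "circ_vec n p W (conj_elt (bar_elt W j)) = \<infinity>"
proof -
  have "{i \<in> {1..n}. Pos i \<in> sdiff (bar_set n W) {bar_elt W j, conj_elt (bar_elt W j)}} = sdiff W {j}"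
    using assms by (auto simp: sdiff_def bar_set_def bar_elt_def)
  then show "circ_vec n p W (bar_elt W j) = p (sdiff W {j})"
    using assms by (auto simp: circ_vec_def bar_p_def bar_set_def bar_elt_def)
  show "circ_vec n p W (conj_elt (bar_elt W j)) = \<infinity>"
    using assms by (auto simp: circ_vec_def bar_set_def bar_elt_def)
qed

lemma circ_vec_outside_Jset: "W \<subseteq> {1..n} \<Longrightarrow> k \<notin> Jset n \<Longrightarrow> circ_vec n p W k = \<infinity>"
  by (auto simp: circ_vec_def bar_set_def Jset_def)

lemma circ_vec_not_minf:
  assumes "is_Pvec n p" "W \<subseteq> {1..n}"
  shows "circ_vec n p W k \<noteq> -\<infinity>"
proof (cases "k \<in> Jset n")
  case True
  then show ?thesis
  proof (cases rule: Jset_cases[where S = W])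
    case (1 j)
    then show ?thesis
      using assms sdiff_subset[OF assms(2), of "{j}"] by (simp add: circ_vec_bar_elt is_Pvec_def)
  next
    case (2 j)
    then show ?thesis using assms by (simp add: circ_vec_bar_elt)
  qed
next
  case False
  then show ?thesis using assms by (simp add: circ_vec_outside_Jset)
qed

lemma dual_vec_Pvec: "is_Pvec n p \<Longrightarrow> is_Pvec n (dual_vec n p)"
  by (auto simp: is_Pvec_def dual_vec_def)

lemma circ_vec_dual:
  assumes "V \<subseteq> {1..n}" "j \<in> {1..n}"
  shows "circ_vec n (dual_vec n p) ({1..n} - V) (conj_elt (bar_elt V j)) = p (sdiff V {j})"
    and "circ_vec n (dual_vec n p) ({1..n} - V) (bar_elt V j) = \<infinity>"
proof -
  have compl: "bar_elt ({1..n} - V) j = conj_elt (bar_elt V j)"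
    using assms(2) by (auto simp: bar_elt_def)
  have "{1..n} - sdiff ({1..n} - V) {j} = sdiff V {j}"
    using assms by (auto simp: sdiff_def)
  then show "circ_vec n (dual_vec n p) ({1..n} - V) (conj_elt (bar_elt V j)) = p (sdiff V {j})"
    using circ_vec_bar_elt(1)[of "{1..n} - V" n j "dual_vec n p"] assms compl
    by (simp add: dual_vec_def)
  show "circ_vec n (dual_vec n p) ({1..n} - V) (bar_elt V j) = \<infinity>"
    using circ_vec_bar_elt(2)[of "{1..n} - V" n j "dual_vec n p"] assms compl by simp
qed

lemma circuitsE:
  assumes "c \<in> circuits n q"
  obtains T lam where "T \<subseteq> {1..n}" "c = (\<lambda>k. circ_vec n q T k + ereal lam)"
  using assms unfolding circuits_def by blast

lemma circuitsI:
  assumes "T \<subseteq> {1..n}" "k \<in> Jset n" "circ_vec n q T k + ereal lam \<noteq> \<infinity>"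
  shows "(\<lambda>k. circ_vec n q T k + ereal lam) \<in> circuits n q"
  using assms unfolding circuits_def supp_def by blast

lemma admissible_set_bar_set: "admissible_set (bar_set n S)"
  by (auto simp: admissible_set_def bar_set_def)

lemma circuit_tvec_admissible:
  assumes "is_Pvec n q" "c \<in> circuits n q"
  shows "c \<in> tvec n" and "admissible_vec n c"
proof -
  obtain T lam where T: "T \<subseteq> {1..n}" and c: "c = (\<lambda>k. circ_vec n q T k + ereal lam)"
    using assms(2) by (rule circuitsE)
  show "c \<in> tvec n"
    using circ_vec_not_minf[OF assms(1) T] circ_vec_outside_Jset[OF T] by (auto simp: tvec_def c)
  have "supp n c \<subseteq> bar_set n T"
    by (auto simp: supp_def c circ_vec_def)
  then show "admissible_vec n c"
    using admissible_set_bar_set[of n T]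
    unfolding admissible_vec_def admissible_set_def by blast
qed

lemma tvec_not_minf: "x \<in> tvec n \<Longrightarrow> x k \<noteq> -\<infinity>"
  by (cases "k \<in> Jset n") (auto simp: tvec_def)

lemma cocycle_not_minf: "y \<in> cocycles n q \<Longrightarrow> y k \<noteq> -\<infinity>"
  unfolding cocycles_def using tvec_not_minf by blast

lemma trop_orth_commute: "trop_orth n x y \<longleftrightarrow> trop_orth n y x"
  unfolding trop_orth_def by (simp add: add.commute)

lemma trop_orth_add_const:
  "trop_orth n (\<lambda>k. x k + ereal a) (\<lambda>k. y k + ereal b) \<longleftrightarrow> trop_orth n x y"
proof -
  have "x k + ereal a + (y k + ereal b) = x k + y k + ereal (a + b)" for k
    by (simp add: ac_simps flip: plus_ereal.simps(1))
  then show ?thesis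
    unfolding trop_orth_def by (simp add: trop_vanish_add_const)
qed

section \<open>Circuits of the dual lie in the cocycle space\<close>

lemma wick_circuits_orth:
  assumes wick: "tropical_wick n p" and V: "V \<subseteq> {1..n}" and W: "W \<subseteq> {1..n}"
  shows "trop_orth n (circ_vec n (dual_vec n p) ({1..n} - V)) (circ_vec n p W)"
proof -
  let ?c = "circ_vec n (dual_vec n p) ({1..n} - V)" and ?c' = "circ_vec n p W"
  have Pv: "is_Pvec n p" using wick by (simp add: tropical_wick_def)
  have "trop_vanish (Jset n) (\<lambda>k. ?c k + ?c' k) \<longleftrightarrow>
        trop_vanish (sdiff V W) (\<lambda>j. p (sdiff V {j}) + p (sdiff W {j}))"
  proof (rule trop_vanish_reindex[OF finite_Jset])
    show "inj_on (bar_elt W) (sdiff V W)"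
      by (simp add: inj_on_def bar_elt_eq_iff)
    show "bar_elt W ` sdiff V W \<subseteq> Jset n"
      using sdiff_subset[OF V W] bar_elt_in_Jset by blast
  next
    fix a assume a: "a \<in> sdiff V W"
    then have a_n: "a \<in> {1..n}" using sdiff_subset[OF V W] by blast
    have "bar_elt W a = conj_elt (bar_elt V a)"
      using a by (simp add: bar_elt_sdiff[of W a V])
    then have "?c (bar_elt W a) = p (sdiff V {a})" "?c' (bar_elt W a) = p (sdiff W {a})"
      using circ_vec_dual(1)[OF V a_n] circ_vec_bar_elt(1)[OF W a_n] by simp_all
    then show "?c (bar_elt W a) + ?c' (bar_elt W a) = p (sdiff V {a}) + p (sdiff W {a})"
      by simp
  next
    fix b assume b: "b \<in> Jset n" "b \<notin> bar_elt W ` sdiff V W"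
    from b(1) show "?c b + ?c' b = \<infinity>"
    proof (cases rule: Jset_cases[where S = W])
      case (1 j)
      then have "j \<notin> sdiff V W" using b(2) by blast
      then have "b = bar_elt V j" using 1 by (simp add: bar_elt_sdiff[of W j V])
      then have "?c b = \<infinity>" using circ_vec_dual(2)[OF V 1(1)] by simp
      then show ?thesis using circ_vec_not_minf[OF Pv W] by (simp add: ereal_infty_add)
    next
      case (2 j)
      then show ?thesis
        using W circ_vec_not_minf[OF dual_vec_Pvec[OF Pv], of "{1..n} - V"]
        by (simp add: circ_vec_bar_elt ereal_add_infty)
    qed
  qed
  then show ?thesis
    using wick V W by (simp add: trop_orth_def tropical_wick_def)
qed

lemma dual_circuits_subset_cocycles:
  assumes wick: "tropical_wick n p"
  shows "circuits n (dual_vec n p) \<subseteq> cocycles n p"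
proof
  fix c assume c: "c \<in> circuits n (dual_vec n p)"
  have Pv: "is_Pvec n p" using wick by (simp add: tropical_wick_def)
  obtain U lam where U: "U \<subseteq> {1..n}" and c_eq: "c = (\<lambda>k. circ_vec n (dual_vec n p) U k + ereal lam)"
    using c by (rule circuitsE)
  have U_eq: "{1..n} - ({1..n} - U) = U" using U by auto
  have "trop_orth n c c'" if circ: "c' \<in> circuits n p" for c'
  proof -
    obtain W mu where W: "W \<subseteq> {1..n}" and c': "c' = (\<lambda>k. circ_vec n p W k + ereal mu)"
      using circ by (rule circuitsE)
    have "trop_orth n (circ_vec n (dual_vec n p) U) (circ_vec n p W)"
      using wick_circuits_orth[OF wick _ W, of "{1..n} - U"] U_eq by simp
    then show ?thesis
      unfolding c_eq c' by (rule trop_orth_add_const[THEN iffD2])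
  qed
  then have "\<forall>c'\<in>circuits n p. trop_orth n c c'" by blast
  then show "c \<in> cocycles n p"
    using circuit_tvec_admissible[OF dual_vec_Pvec[OF Pv] c] by (simp add: cocycles_def)
qed

lemma perp_cocycles_subset_dual_cocycles:
  assumes "tropical_wick n p" "x \<in> trop_perp n (cocycles n p)" "admissible_vec n x"
  shows "x \<in> cocycles n (dual_vec n p)"
proof -
  from assms(2) have x: "x \<in> tvec n" and orth: "\<forall>c\<in>cocycles n p. trop_orth n c x"
    unfolding trop_perp_def by auto
  have "trop_orth n x c" if "c \<in> circuits n (dual_vec n p)" for c
  proof -
    have "c \<in> cocycles n p" using that dual_circuits_subset_cocycles[OF assms(1)] by blast
    then show ?thesis using orth trop_orth_commute[of n x c] by blast
  qed
  then have "\<forall>c\<in>circuits n (dual_vec n p). trop_orth n x c" by blast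
  with x assms(3) show ?thesis by (simp add: cocycles_def)
qed

section \<open>Cocycles are dominated by dual circuits\<close>

lemma cocycle_orth_circ_vec:
  assumes y: "y \<in> cocycles n q" and W: "W \<subseteq> {1..n}"
  shows "trop_orth n y (circ_vec n q W)"
proof (cases "supp n (circ_vec n q W) = {}")
  case False
  have "circ_vec n q W = (\<lambda>k. circ_vec n q W k + ereal 0)"
    by (simp add: zero_ereal_def[symmetric])
  with False W have "circ_vec n q W \<in> circuits n q"
    unfolding circuits_def by blast
  then show ?thesis using y by (simp add: cocycles_def)
next
  case True
  have "y k \<noteq> -\<infinity>" for k
    using y by (rule cocycle_not_minf)
  then have "\<forall>k\<in>Jset n. y k + circ_vec n q W k = \<infinity>"
    using True by (auto simp: supp_def ereal_add_infty)
  then show ?thesis by (simp add: trop_orth_def trop_vanish_def)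
qed

lemma admissible_vec_conj_bar_elt:
  assumes "admissible_vec n y" "j \<in> {1..n}"
  shows "y (conj_elt (bar_elt {i \<in> {1..n}. y (Pos i) \<noteq> \<infinity>} j)) = \<infinity>"
proof (rule ccontr)
  assume "y (conj_elt (bar_elt {i \<in> {1..n}. y (Pos i) \<noteq> \<infinity>} j)) \<noteq> \<infinity>"
  with assms(2) have "Pos j \<in> supp n y" "Star j \<in> supp n y"
    by (auto simp: bar_elt_def supp_def Jset_def split: if_splits)
  then show False
    using assms(1) unfolding admissible_vec_def admissible_set_def by force
qed

lemma cocycle_exchange:
  assumes y: "y \<in> cocycles n p" and Pv: "is_Pvec n p"
    and S: "S = {i \<in> {1..n}. y (Pos i) \<noteq> \<infinity>}" and Y: "Y \<subseteq> {1..n}"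
  shows "trop_vanish ({1..n} - sdiff S Y) (\<lambda>j. y (bar_elt S j) + p (sdiff Y {j}))"
proof -
  have y_nm: "y k \<noteq> -\<infinity>" for k
    using y by (rule cocycle_not_minf)
  have "trop_vanish (Jset n) (\<lambda>k. y k + circ_vec n p Y k) \<longleftrightarrow>
        trop_vanish ({1..n} - sdiff S Y) (\<lambda>j. y (bar_elt S j) + p (sdiff Y {j}))"
  proof (rule trop_vanish_reindex[OF finite_Jset])
    show "inj_on (bar_elt S) ({1..n} - sdiff S Y)"
      by (simp add: inj_on_def bar_elt_eq_iff)
    show "bar_elt S ` ({1..n} - sdiff S Y) \<subseteq> Jset n"
      using bar_elt_in_Jset by blast
  next
    fix a assume a: "a \<in> {1..n} - sdiff S Y"
    then have "bar_elt S a = bar_elt Y a"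
      by (simp add: bar_elt_sdiff[of Y a S])
    then show "y (bar_elt S a) + circ_vec n p Y (bar_elt S a) = y (bar_elt S a) + p (sdiff Y {a})"
      using circ_vec_bar_elt(1)[OF Y, of a] a by simp
  next
    fix b assume b: "b \<in> Jset n" "b \<notin> bar_elt S ` ({1..n} - sdiff S Y)"
    from b(1) show "y b + circ_vec n p Y b = \<infinity>"
    proof (cases rule: Jset_cases[where S = S])
      case (1 j)
      then have "j \<in> sdiff S Y" using b(2) by blast
      then have "b = conj_elt (bar_elt Y j)"
        using 1 by (simp add: bar_elt_sdiff[of Y j S])
      then show ?thesis
        using circ_vec_bar_elt(2)[OF Y 1(1)] y_nm by (simp add: ereal_add_infty)
    next
      case (2 j)
      then have "y b = \<infinity>"
        using admissible_vec_conj_bar_elt[of n y j] y S by (simp add: cocycles_def)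
      then show ?thesis
        using circ_vec_not_minf[OF Pv Y] by (simp add: ereal_infty_add)
    qed
  qed
  then show ?thesis
    using cocycle_orth_circ_vec[OF y Y] by (simp add: trop_orth_def)
qed

text \<open>
  The combinatorial core, abstracted from a cocycle \<open>y\<close> of \<open>p\<close> with positive support
  \<open>S\<close>: \<open>u j = y (bar_elt S j)\<close>, and \<open>exchange\<close> is orthogonality of \<open>y\<close> to the circuit
  \<open>c_Y\<close> (lemma \<open>cocycle_exchange\<close>).
\<close>

locale exchange_system =
  fixes n :: nat and p :: "nat set \<Rightarrow> ereal" and u :: "nat \<Rightarrow> ereal" and S :: "nat set"
  assumes p_Pvec: "is_Pvec n p"
    and u_not_minf: "u j \<noteq> -\<infinity>"
    and S_subset: "S \<subseteq> {1..n}"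
    and exchange: "Y \<subseteq> {1..n} \<Longrightarrow> trop_vanish ({1..n} - sdiff S Y) (\<lambda>j. u j + p (sdiff Y {j}))"
begin

lemma p_not_minf: "X \<subseteq> {1..n} \<Longrightarrow> p X \<noteq> -\<infinity>"
  using p_Pvec by (simp add: is_Pvec_def)

lemma exchange_step:
  assumes Y: "Y \<subseteq> {1..n}" and a: "a \<in> {1..n} - sdiff S Y" and fin: "u a + p (sdiff Y {a}) \<noteq> \<infinity>"
  obtains b where "b \<in> {1..n} - sdiff S Y" "b \<noteq> a" "u b \<noteq> \<infinity>" "p (sdiff Y {b}) \<noteq> \<infinity>"
    "u b + p (sdiff Y {b}) \<le> u a + p (sdiff Y {a})"
proof -
  obtain b where b: "b \<in> {1..n} - sdiff S Y" "b \<noteq> a"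
    and le: "u b + p (sdiff Y {b}) \<le> u a + p (sdiff Y {a})"
    using trop_vanishD[OF exchange[OF Y] a fin] by blast
  have "u b + p (sdiff Y {b}) \<noteq> \<infinity>" using le fin by auto
  moreover have "p (sdiff Y {b}) \<noteq> -\<infinity>"
    using b(1) by (intro p_not_minf sdiff_singleton_subset[OF Y]) auto
  ultimately have "u b \<noteq> \<infinity>" "p (sdiff Y {b}) \<noteq> \<infinity>"
    using u_not_minf[of b] by auto
  with b le that show thesis by blast
qed

definition feasible :: "nat set \<Rightarrow> bool" where
  "feasible X \<longleftrightarrow> X \<subseteq> {1..n} \<and> p X \<noteq> \<infinity>"

definition max_dist :: nat where
  "max_dist = Max ((\<lambda>X. card (sdiff S X)) ` Collect feasible)"

lemma finite_feasible: "finite (Collect feasible)"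
  by (rule finite_subset[of _ "Pow {1..n}"]) (unfold feasible_def, blast, simp)

lemma card_sdiff_le_max_dist: "feasible X \<Longrightarrow> card (sdiff S X) \<le> max_dist"
  unfolding max_dist_def using finite_feasible by (intro Max_ge) auto

lemma finite_sdiff: "X \<subseteq> {1..n} \<Longrightarrow> finite (sdiff S X)"
  using sdiff_subset[OF S_subset] by (meson finite_atLeastAtMost finite_subset)

definition far_avoiding :: "nat \<Rightarrow> nat set set" where
  "far_avoiding i = {X. feasible X \<and> card (sdiff S X) = max_dist \<and> i \<notin> sdiff S X}"

lemma far_avoiding_nonempty:
  assumes ex: "\<exists>X. feasible X" and i0: "i0 \<in> {1..n}" "u i0 \<noteq> \<infinity>"
  shows "far_avoiding i0 \<noteq> {}"
proof -
  have "max_dist \<in> (\<lambda>X. card (sdiff S X)) ` Collect feasible"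
    unfolding max_dist_def using finite_feasible ex by (intro Max_in) auto
  then obtain X1 where X1: "feasible X1" "card (sdiff S X1) = max_dist" by auto
  show ?thesis
  proof (cases "i0 \<in> sdiff S X1")
    case False
    with X1 show ?thesis by (auto simp: far_avoiding_def)
  next
    case True
    let ?Y = "sdiff X1 {i0}"
    have X1_sub: "X1 \<subseteq> {1..n}" and "p X1 \<noteq> \<infinity>" using X1 by (auto simp: feasible_def)
    have Y: "?Y \<subseteq> {1..n}" using X1_sub i0(1) by (rule sdiff_singleton_subset)
    have SY: "sdiff S ?Y = sdiff S X1 - {i0}"
      using True by (rule sdiff_sdiff_singleton_in)
    have "u i0 + p X1 \<noteq> \<infinity>"
      using i0(2) \<open>p X1 \<noteq> \<infinity>\<close> u_not_minf[of i0] p_not_minf[OF X1_sub] by auto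
    then obtain b where b: "b \<in> {1..n} - sdiff S ?Y" "b \<noteq> i0" "p (sdiff ?Y {b}) \<noteq> \<infinity>"
      using exchange_step[OF Y, of i0] i0(1) SY by auto
    have "sdiff S (sdiff ?Y {b}) = insert b (sdiff S X1 - {i0})"
      using b(1) SY sdiff_sdiff_singleton_notin[of b S ?Y] by simp
    moreover have "card (insert b (sdiff S X1 - {i0})) = card (sdiff S X1)"
      using finite_sdiff[OF X1_sub] True b(1) SY by (intro card_insert_Diff_singleton) auto
    ultimately have "card (sdiff S (sdiff ?Y {b})) = max_dist" "i0 \<notin> sdiff S (sdiff ?Y {b})"
      using b(2) X1(2) by simp_all
    moreover have "feasible (sdiff ?Y {b})"
      using b(1,3) sdiff_singleton_subset[OF Y, of b] by (simp add: feasible_def)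
    ultimately show ?thesis by (auto simp: far_avoiding_def)
  qed
qed

definition infinite_count :: "nat set \<Rightarrow> nat" where
  "infinite_count X = card {j \<in> sdiff S X. u j = \<infinity>}"

text \<open>
  \<open>weight\<close> is only compared on feasible sets, where \<open>p X\<close> is finite; indices with
  \<open>u j = \<infinity>\<close> are left out of the sum and counted by \<open>infinite_count\<close> instead.
\<close>

definition weight :: "nat set \<Rightarrow> real" where
  "weight X = real_of_ereal (p X) + (\<Sum>j \<in> {j \<in> sdiff S X. u j \<noteq> \<infinity>}. real_of_ereal (u j))"

lemma exchange_improves:
  assumes i0: "i0 \<in> {1..n}" and X0: "X0 \<in> far_avoiding i0" and j: "j \<in> sdiff S X0"
    and less: "p (sdiff (sdiff X0 {j}) {i0}) + u i0 < u j + p X0"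
  obtains X b where "X \<in> far_avoiding i0" "sdiff S X = insert b (sdiff S X0 - {j})"
    "b \<notin> sdiff S X0" "u b \<noteq> \<infinity>" "u b + p X < u j + p X0"
proof -
  have X0_sub: "X0 \<subseteq> {1..n}" and card0: "card (sdiff S X0) = max_dist"
    and i0X0: "i0 \<notin> sdiff S X0"
    using X0 by (auto simp: far_avoiding_def feasible_def)
  have jN: "j \<in> {1..n}" using j sdiff_subset[OF S_subset X0_sub] by blast
  let ?Y = "sdiff X0 {j}"
  have Y: "?Y \<subseteq> {1..n}" using X0_sub jN by (rule sdiff_singleton_subset)
  have SY: "sdiff S ?Y = sdiff S X0 - {j}" using j by (rule sdiff_sdiff_singleton_in)
  have "u i0 + p (sdiff ?Y {i0}) \<noteq> \<infinity>" using less by (auto simp: add.commute)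
  then obtain b where b: "b \<in> {1..n} - sdiff S ?Y" "b \<noteq> i0" "u b \<noteq> \<infinity>" "p (sdiff ?Y {b}) \<noteq> \<infinity>"
    and le: "u b + p (sdiff ?Y {b}) \<le> u i0 + p (sdiff ?Y {i0})"
    using exchange_step[OF Y, of i0] i0 i0X0 SY by auto
  have lt: "u b + p (sdiff ?Y {b}) < u j + p X0"
    using le less by (simp add: add.commute)
  then have "b \<noteq> j" by auto
  then have bX0: "b \<notin> sdiff S X0" using b(1) SY by auto
  have SX: "sdiff S (sdiff ?Y {b}) = insert b (sdiff S X0 - {j})"
    using b(1) SY sdiff_sdiff_singleton_notin[of b S ?Y] by simp
  have "card (sdiff S (sdiff ?Y {b})) = max_dist"
    unfolding SX card0[symmetric] using finite_sdiff[OF X0_sub] j bX0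
    by (intro card_insert_Diff_singleton) auto
  moreover have "feasible (sdiff ?Y {b})"
    using b(1,4) sdiff_singleton_subset[OF Y, of b] by (simp add: feasible_def)
  ultimately have "sdiff ?Y {b} \<in> far_avoiding i0"
    using SX b(2) i0X0 by (simp add: far_avoiding_def)
  with SX bX0 b(3) lt that show thesis by blast
qed

lemma weight_exchange_less:
  assumes X: "feasible X" and X0: "feasible X0" and SX: "sdiff S X = insert b (sdiff S X0 - {j})"
    and j: "j \<in> sdiff S X0" "u j \<noteq> \<infinity>" and b: "b \<notin> sdiff S X0" "u b \<noteq> \<infinity>"
    and lt: "u b + p X < u j + p X0"
  shows "weight X < weight X0"
proof -
  let ?R = "{k \<in> sdiff S X0 - {j}. u k \<noteq> \<infinity>}"
  have X_sub: "X \<subseteq> {1..n}" "p X \<noteq> \<infinity>" and X0_sub: "X0 \<subseteq> {1..n}" "p X0 \<noteq> \<infinity>"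
    using X X0 by (auto simp: feasible_def)
  have "{k \<in> sdiff S X. u k \<noteq> \<infinity>} = insert b ?R" "{k \<in> sdiff S X0. u k \<noteq> \<infinity>} = insert j ?R"
    using SX b(2) j by auto
  moreover have "finite ?R" "b \<notin> ?R" "j \<notin> ?R"
    using finite_sdiff[OF X0_sub(1)] b(1) by auto
  ultimately have "weight X = real_of_ereal (p X) + (real_of_ereal (u b) + sum (real_of_ereal \<circ> u) ?R)"
    "weight X0 = real_of_ereal (p X0) + (real_of_ereal (u j) + sum (real_of_ereal \<circ> u) ?R)"
    by (simp_all add: weight_def)
  moreover have "real_of_ereal (u b) + real_of_ereal (p X) < real_of_ereal (u j) + real_of_ereal (p X0)"
    using lt b(2) j(2) X_sub X0_sub u_not_minf[of b] u_not_minf[of j] p_not_minf[of X] p_not_minf[of X0]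
    by (cases "u b"; cases "u j"; cases "p X"; cases "p X0") auto
  ultimately show ?thesis by simp
qed

lemma exchange_inequality:
  assumes i0: "i0 \<in> {1..n}" and X0: "X0 \<in> far_avoiding i0"
    and lexmin: "\<And>X. X \<in> far_avoiding i0 \<Longrightarrow> infinite_count X0 < infinite_count X
        \<or> (infinite_count X0 = infinite_count X \<and> weight X0 \<le> weight X)"
    and j: "j \<in> sdiff S X0"
  shows "u j + p X0 \<le> p (sdiff (sdiff X0 {j}) {i0}) + u i0"
proof (rule ccontr)
  assume "\<not> ?thesis"
  then have "p (sdiff (sdiff X0 {j}) {i0}) + u i0 < u j + p X0" by simp
  then obtain X b where X: "X \<in> far_avoiding i0" and SX: "sdiff S X = insert b (sdiff S X0 - {j})"
    and b: "b \<notin> sdiff S X0" "u b \<noteq> \<infinity>" and lt: "u b + p X < u j + p X0"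
    by (rule exchange_improves[OF i0 X0 j])
  have fin: "finite (sdiff S X0)"
    using X0 finite_sdiff by (auto simp: far_avoiding_def feasible_def)
  show False
  proof (cases "u j = \<infinity>")
    case True
    have "infinite_count X = card ({k \<in> sdiff S X0. u k = \<infinity>} - {j})"
      unfolding infinite_count_def using SX b(2) by (intro arg_cong[where f = card]) auto
    also have "\<dots> < infinite_count X0"
      unfolding infinite_count_def using True j fin by (intro card_Diff1_less) auto
    finally show False using lexmin[OF X] by simp
  next
    case False
    have "{k \<in> sdiff S X. u k = \<infinity>} = {k \<in> sdiff S X0. u k = \<infinity>}"
      using SX b(2) False j by auto
    then have "infinite_count X = infinite_count X0"
      by (simp add: infinite_count_def)
    moreover have "weight X < weight X0"
      using X X0 SX j False b lt by (intro weight_exchange_less) (auto simp: far_avoiding_def)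
    ultimately show False using lexmin[OF X] by simp
  qed
qed

lemma far_avoiding_extension_infeasible:
  assumes X0: "X0 \<in> far_avoiding i0" and i0: "i0 \<in> {1..n}"
    and j: "j \<in> {1..n}" "j \<notin> insert i0 (sdiff S X0)"
  shows "p (sdiff (sdiff X0 {i0}) {j}) = \<infinity>"
proof (rule ccontr)
  let ?V = "sdiff X0 {i0}"
  have X0_sub: "X0 \<subseteq> {1..n}" and card0: "card (sdiff S X0) = max_dist" and i0X0: "i0 \<notin> sdiff S X0"
    using X0 by (auto simp: far_avoiding_def feasible_def)
  have V: "?V \<subseteq> {1..n}" using X0_sub i0 by (rule sdiff_singleton_subset)
  assume "p (sdiff ?V {j}) \<noteq> \<infinity>"
  then have "card (sdiff S (sdiff ?V {j})) \<le> max_dist"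
    using sdiff_singleton_subset[OF V j(1)] by (intro card_sdiff_le_max_dist) (simp add: feasible_def)
  moreover have "sdiff S ?V = insert i0 (sdiff S X0)"
    using i0X0 by (rule sdiff_sdiff_singleton_notin)
  then have "sdiff S (sdiff ?V {j}) = insert j (insert i0 (sdiff S X0))"
    using j(2) sdiff_sdiff_singleton_notin[of j S ?V] by simp
  ultimately show False
    using j(2) i0X0 finite_sdiff[OF X0_sub] card0 by simp
qed

lemma dominating_witness:
  assumes ex: "\<exists>X\<subseteq>{1..n}. p X \<noteq> \<infinity>" and i0: "i0 \<in> {1..n}" "u i0 \<noteq> \<infinity>"
  obtains V lam where "V \<subseteq> {1..n}" "i0 \<in> sdiff S V" "p (sdiff V {i0}) + ereal lam = u i0"
    "\<And>j. j \<in> sdiff S V \<Longrightarrow> u j \<le> p (sdiff V {j}) + ereal lam"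
    "\<And>j. j \<in> {1..n} \<Longrightarrow> j \<notin> sdiff S V \<Longrightarrow> p (sdiff V {j}) = \<infinity>"
proof -
  have "finite (far_avoiding i0)"
    using finite_feasible by (rule finite_subset[rotated]) (auto simp: far_avoiding_def)
  moreover have "far_avoiding i0 \<noteq> {}"
    using ex i0 by (intro far_avoiding_nonempty) (auto simp: feasible_def)
  ultimately obtain X0 where X0: "X0 \<in> far_avoiding i0"
    and lexmin: "\<And>X. X \<in> far_avoiding i0 \<Longrightarrow> infinite_count X0 < infinite_count X
        \<or> (infinite_count X0 = infinite_count X \<and> weight X0 \<le> weight X)"
    by (rule finite_lex_min[where f = infinite_count and g = weight]) blast
  have X0_sub: "X0 \<subseteq> {1..n}" and pX0: "p X0 \<noteq> \<infinity>" and i0X0: "i0 \<notin> sdiff S X0"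
    using X0 by (auto simp: far_avoiding_def feasible_def)
  define V where "V = sdiff X0 {i0}"
  obtain a where a: "p X0 = ereal a"
    using pX0 p_not_minf[OF X0_sub] by (cases "p X0") auto
  obtain e where e: "u i0 = ereal e"
    using i0(2) u_not_minf[of i0] by (cases "u i0") auto
  define lam where "lam = e - a"
  have V: "V \<subseteq> {1..n}" unfolding V_def using X0_sub i0(1) by (rule sdiff_singleton_subset)
  have SV: "sdiff S V = insert i0 (sdiff S X0)"
    unfolding V_def using i0X0 by (rule sdiff_sdiff_singleton_notin)
  have eq: "p (sdiff V {i0}) + ereal lam = u i0"
    unfolding V_def lam_def using a e by simp
  have "u j \<le> p (sdiff V {j}) + ereal lam" if j: "j \<in> sdiff S V" for j
  proof (cases "j = i0")
    case False
    with j SV have "j \<in> sdiff S X0" by simp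
    from exchange_inequality[OF i0(1) X0 lexmin this]
    have "u j + p X0 \<le> p (sdiff V {j}) + u i0"
      by (simp add: V_def sdiff_singleton_commute)
    moreover have "p (sdiff V {j}) \<noteq> -\<infinity>"
      using j sdiff_subset[OF S_subset V] by (intro p_not_minf sdiff_singleton_subset[OF V]) blast
    ultimately show ?thesis
      using u_not_minf[of j] a e unfolding lam_def
      by (cases "u j"; cases "p (sdiff V {j})") simp_all
  qed (use eq in simp)
  moreover have "p (sdiff V {j}) = \<infinity>" if "j \<in> {1..n}" "j \<notin> sdiff S V" for j
    using far_avoiding_extension_infeasible[OF X0 i0(1) that(1)] that(2) SV by (simp add: V_def)
  ultimately show thesis
    using that V SV eq by blast
qed

end
section \<open>Duality\<close>

lemma cocycle_dominated_by_dual_circuit: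
  assumes y: "y \<in> cocycles n p" and Pv: "is_Pvec n p" and ex: "\<exists>X\<subseteq>{1..n}. p X \<noteq> \<infinity>"
    and k0: "k0 \<in> Jset n" "y k0 \<noteq> \<infinity>"
  obtains d where "d \<in> circuits n (dual_vec n p)" "\<And>k. k \<in> Jset n \<Longrightarrow> y k \<le> d k" "d k0 = y k0"
proof -
  define S where "S = {i \<in> {1..n}. y (Pos i) \<noteq> \<infinity>}"
  interpret exchange_system n p "\<lambda>j. y (bar_elt S j)" S
    using Pv cocycle_not_minf[OF y] cocycle_exchange[OF y Pv S_def]
    by unfold_locales (auto simp: S_def)
  have y_conj: "y (conj_elt (bar_elt S j)) = \<infinity>" if "j \<in> {1..n}" for j
    using y that admissible_vec_conj_bar_elt by (simp add: cocycles_def S_def)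
  obtain i0 where i0: "i0 \<in> {1..n}" "k0 = bar_elt S i0"
    using k0(1)
  proof (cases rule: Jset_cases[where S = S])
    case (2 j)
    then show ?thesis using k0(2) y_conj by simp
  qed
  obtain V lam where V: "V \<subseteq> {1..n}" "i0 \<in> sdiff S V" "p (sdiff V {i0}) + ereal lam = y k0"
    and dom: "\<And>j. j \<in> sdiff S V \<Longrightarrow> y (bar_elt S j) \<le> p (sdiff V {j}) + ereal lam"
    and far: "\<And>j. j \<in> {1..n} \<Longrightarrow> j \<notin> sdiff S V \<Longrightarrow> p (sdiff V {j}) = \<infinity>"
    using dominating_witness[OF ex i0(1)] k0(2) i0(2) by metis
  define d where "d = (\<lambda>k. circ_vec n (dual_vec n p) ({1..n} - V) k + ereal lam)"
  have d_bar: "d (bar_elt S j) = (if j \<in> sdiff S V then p (sdiff V {j}) + ereal lam else \<infinity>)"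
    and d_conj: "d (conj_elt (bar_elt S j)) = (if j \<in> sdiff S V then \<infinity> else p (sdiff V {j}) + ereal lam)"
    if "j \<in> {1..n}" for j
    using circ_vec_dual[OF V(1) that] bar_elt_sdiff[of S j V]
    by (simp_all add: d_def sdiff_commute[of S V] split: if_splits)
  have "y k \<le> d k" if "k \<in> Jset n" for k
    using that
  proof (cases rule: Jset_cases[where S = S])
    case (1 j)
    then show ?thesis using dom d_bar by simp
  next
    case (2 j)
    then show ?thesis using y_conj far d_conj by simp
  qed
  moreover have "d k0 = y k0"
    using d_bar[OF i0(1)] i0(2) V(2,3) by simp
  moreover have "d \<in> circuits n (dual_vec n p)"
    unfolding d_def using k0 \<open>d k0 = y k0\<close> by (intro circuitsI[of _ n k0]) (auto simp: d_def)
  ultimately show thesis using that by blast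
qed

lemma cocycles_orth_dual_cocycles:
  assumes y: "y \<in> cocycles n p" and x: "x \<in> cocycles n (dual_vec n p)"
    and Pv: "is_Pvec n p" and ex: "\<exists>X\<subseteq>{1..n}. p X \<noteq> \<infinity>"
  shows "trop_orth n y x"
proof (rule ccontr)
  assume "\<not> trop_orth n y x"
  then obtain k0 where k0: "k0 \<in> Jset n" "y k0 + x k0 \<noteq> \<infinity>"
    and min: "\<And>b. b \<in> Jset n \<Longrightarrow> b \<noteq> k0 \<Longrightarrow> y k0 + x k0 < y b + x b"
    unfolding trop_orth_def trop_vanish_iff_no_unique_min[OF finite_Jset] by blast
  have "y k0 \<noteq> \<infinity>"
    using k0(2) ereal_infty_add[OF cocycle_not_minf[OF x]] by auto
  then obtain d where d: "d \<in> circuits n (dual_vec n p)"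
    and dom: "\<And>k. k \<in> Jset n \<Longrightarrow> y k \<le> d k" and eq: "d k0 = y k0"
    using cocycle_dominated_by_dual_circuit[OF y Pv ex k0(1)] by blast
  have "x k0 + d k0 < x b + d b" if "b \<in> Jset n" "b \<noteq> k0" for b
  proof -
    have "x k0 + d k0 = y k0 + x k0" using eq by (simp add: add.commute)
    also have "\<dots> < y b + x b" using min that by blast
    also have "\<dots> \<le> d b + x b" using dom[OF that(1)] by (rule add_right_mono)
    also have "\<dots> = x b + d b" by (rule add.commute)
    finally show ?thesis .
  qed
  moreover have "x k0 + d k0 \<noteq> \<infinity>" using k0(2) eq by (simp add: add.commute)
  ultimately have "\<not> trop_vanish (Jset n) (\<lambda>k. x k + d k)"
    unfolding trop_vanish_iff_no_unique_min[OF finite_Jset] using k0(1) by blast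
  with x d show False by (simp add: cocycles_def trop_orth_def)
qed

theorem corollary6p10:
  fixes n :: nat and p :: "nat set \<Rightarrow> ereal"
  assumes "tropical_wick n p"
    and "\<exists>S\<subseteq>{1..n}. p S \<noteq> \<infinity>"
  shows "cocycles n (dual_vec n p) = {x \<in> trop_perp n (cocycles n p). admissible_vec n x}"
proof
  have Pv: "is_Pvec n p" using assms(1) by (simp add: tropical_wick_def)
  show "cocycles n (dual_vec n p) \<subseteq> {x \<in> trop_perp n (cocycles n p). admissible_vec n x}"
  proof
    fix x assume x: "x \<in> cocycles n (dual_vec n p)"
    then have "\<forall>y\<in>cocycles n p. trop_orth n y x"
      using cocycles_orth_dual_cocycles[OF _ x Pv assms(2)] by blast
    with x show "x \<in> {x \<in> trop_perp n (cocycles n p). admissible_vec n x}"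
      by (simp add: trop_perp_def cocycles_def)
  qed
  show "{x \<in> trop_perp n (cocycles n p). admissible_vec n x} \<subseteq> cocycles n (dual_vec n p)"
    using perp_cocycles_subset_dual_cocycles[OF assms(1)] by blast
qed

end
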